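(* If $a_1,a_2,a_3,a_4\ge2$ and $D=a_1+a_2+a_3+a_4$, then the leading term of $V_3(x_1^{a_1}x_2^{a_2}x_1^{a_3}x_2^{a_4})$ is $+s^{3D-4}$.
   Context: $\mathcal{B}_3$ is the 3-strand braid group with Artin generators $x_1,x_2$; $V_3(\beta)$ is the Jones polynomial of the closure of $\beta$, normalized by $V(\text{unknot})=1$ and $q^{-1}V_{L_+}-qV_{L_-}=(q^{1/2}-q^{-1/2})V_{L_0}$, written as a Laurent polynomial in $s=q^{-1/2}$. Conventions: closures of $\alpha x_i^{e+2}\gamma$, $\alpha x_i^{e+1}\gamma$, $\alpha x_i^{e}\gamma$ play the roles of $L_-,L_0,L_+$ (e.g. the closure of $x_1^2\in\mathcal B_2$ has Jones polynomial $-s-s^5$). The leading term is the term of highest degree in $s$. *)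

theory Defs
  imports "HOL-Computational_Algebra.Formal_Laurent_Series"
begin

text \<open>3-strand braid words: a list of nonzero integers, where the entry \<open>i\<close>
  (\<open>i \<in> {1,2}\<close>) stands for the Artin generator \<open>x_i\<close> and \<open>-i\<close> for its inverse.\<close>

definition braid3_word :: "int list \<Rightarrow> bool" where
  "braid3_word w \<longleftrightarrow> (\<forall>g \<in> set w. g \<in> {1, 2, -1, -2})"

definition crossing_sign :: "int \<Rightarrow> int" where
  "crossing_sign g = (if g > 0 then 1 else -1)"

definition writhe :: "int list \<Rightarrow> int" where
  "writhe w = (\<Sum>k<length w. crossing_sign (w ! k))"

text \<open>Kauffman states of the closed braid diagram: for each crossing, \<open>True\<close> = the
  vertical (identity) smoothing, \<open>False\<close> = the horizontal (cup-cap, \<open>e_i\<close>) smoothing.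
  Points \<open>(k,j)\<close>, \<open>k \<in> {0..m}\<close> level, \<open>j \<in> {1,2,3}\<close> strand position; the closure
  joins level \<open>m\<close> to level \<open>0\<close>.\<close>

definition state_points :: "nat \<Rightarrow> (nat \<times> nat) set" where
  "state_points m = {0..m} \<times> {1,2,3}"

definition state_edges :: "int list \<Rightarrow> bool list \<Rightarrow> ((nat \<times> nat) \<times> (nat \<times> nat)) set" where
  "state_edges w st =
     {((k, j), (Suc k, j)) | k j. k < length w \<and> j \<in> {1,2,3} \<and>
         (st ! k \<or> (j \<noteq> nat \<bar>w ! k\<bar> \<and> j \<noteq> nat \<bar>w ! k\<bar> + 1))}
   \<union> {((k, nat \<bar>w ! k\<bar>), (k, nat \<bar>w ! k\<bar> + 1)) | k. k < length w \<and> \<not> st ! k}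
   \<union> {((Suc k, nat \<bar>w ! k\<bar>), (Suc k, nat \<bar>w ! k\<bar> + 1)) | k. k < length w \<and> \<not> st ! k}
   \<union> {((length w, j), (0, j)) | j. j \<in> {1,2,3}}"

definition state_loops :: "int list \<Rightarrow> bool list \<Rightarrow> nat" where
  "state_loops w st =
     card (state_points (length w) // ((state_edges w st \<union> (state_edges w st)\<inverse>)\<^sup>*))"

definition smon :: "int \<Rightarrow> int fls" where
  "smon e = fls_shift (- e) 1"

text \<open>Loop value \<open>d = -A^2 - A^{-2} = -s - s^{-1}\<close>.\<close>
definition loop_val :: "int fls" where
  "loop_val = - fls_X - fls_X_inv"

text \<open>Jones polynomial of the closure via the Kauffman bracket
  \<open>V = (-A^{-3})^{w} \<Sum>_S A^{a(S)-b(S)} d^{loops(S)-1}\<close>, with \<open>A = s^{-1/2}\<close>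
  (i.e. \<open>A = q^{1/4}\<close>).  A positive crossing contributes \<open>A\<close> for the vertical and
  \<open>A^{-1}\<close> for the horizontal smoothing, a negative one the reverse. Combining with
  \<open>A^{-3 w}\<close>, each crossing of sign \<open>\<epsilon>\<close> contributes \<open>s^{\<epsilon>}\<close> (vertical) resp.
  \<open>s^{2\<epsilon>}\<close> (horizontal).\<close>
definition state_exp :: "int list \<Rightarrow> bool list \<Rightarrow> int" where
  "state_exp w st = (\<Sum>k<length w. crossing_sign (w ! k) * (if st ! k then 1 else 2))"

definition V3 :: "int list \<Rightarrow> int fls" where
  "V3 w = (-1) ^ nat \<bar>writhe w\<bar> *
     (\<Sum>st \<in> {st :: bool list. length st = length w}.
        smon (state_exp w st) * loop_val ^ (state_loops w st - 1))"

definition leading_term :: "int fls \<Rightarrow> int \<Rightarrow> int \<Rightarrow> bool" where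
  "leading_term p c n \<longleftrightarrow> c \<noteq> 0 \<and> fls_nth p n = c \<and> (\<forall>m > n. fls_nth p m = 0)"

end

theory Submission
  imports Defs
begin

text \<open>In the Kauffman state sum of the closed positive braid, a state with \<open>c\<close> vertical
  smoothings and \<open>l\<close> loops contributes a term of top degree \<open>2D - c + l - 1\<close>. In the
  all-horizontal state each of the \<open>D - 4\<close> rows strictly inside one of the four blocks carries a
  small loop and everything else forms one big loop, so \<open>c = 0\<close>, \<open>l = D - 3\<close> and the degree is
  \<open>3D - 4\<close>. A state whose only vertical smoothing is at \<open>k0\<close> has one loop fewer, since that
  smoothing fuses a small loop with a neighbouring loop, and turning a further crossing vertical adds
  at most one loop while lowering the exponent by one. Hence every other state has degree at most
  \<open>3D - 6\<close>, and the top coefficient is \<open>(-1)^D (-1)^(D-4) = 1\<close>.\<close>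

section \<open>Connected components of a graph\<close>

definition conn :: "('a \<times> 'a) set \<Rightarrow> ('a \<times> 'a) set" where
  "conn E = (E \<union> E\<inverse>)\<^sup>*"

lemma conn_refl [simp]: "(x, x) \<in> conn E"
  by (simp add: conn_def)

lemma conn_sym: "(x, y) \<in> conn E \<Longrightarrow> (y, x) \<in> conn E"
  unfolding conn_def by (metis converse_Un converse_converse rtrancl_converseI sup_commute)

lemma conn_trans: "(x, y) \<in> conn E \<Longrightarrow> (y, z) \<in> conn E \<Longrightarrow> (x, z) \<in> conn E"
  unfolding conn_def by (rule rtrancl_trans)

lemma conn_edge: "(x, y) \<in> E \<Longrightarrow> (x, y) \<in> conn E"
  and conn_edge_rev: "(y, x) \<in> E \<Longrightarrow> (x, y) \<in> conn E"
  by (auto simp: conn_def)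

lemma conn_Image_eq: "(x, y) \<in> conn E \<Longrightarrow> conn E `` {x} = conn E `` {y}"
  by (auto intro: conn_trans conn_sym)

lemma conn_subset_self: "E \<subseteq> conn E"
  unfolding conn_def by auto

lemma conn_mono: "E \<subseteq> E' \<Longrightarrow> conn E \<subseteq> conn E'"
  unfolding conn_def by (intro rtrancl_mono) auto

lemma conn_subset_equiv:
  assumes "equiv UNIV R" "E \<subseteq> R"
  shows "conn E \<subseteq> R"
proof
  fix p assume "p \<in> conn E"
  then obtain x y where p: "p = (x, y)" "(x, y) \<in> (E \<union> E\<inverse>)\<^sup>*"
    by (cases p) (auto simp: conn_def)
  from p(2) have "(x, y) \<in> R"
  proof (induction rule: rtrancl_induct)
    case base show ?case using assms(1) by (simp add: equiv_def refl_on_def)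
  next
    case (step y z)
    then have "(y, z) \<in> R" using assms by (auto simp: equiv_def sym_def)
    with step.IH show ?case using assms(1) by (auto simp: equiv_def elim: transE)
  qed
  with p show "p \<in> R" by simp
qed

lemma conn_subset_conn: "E \<subseteq> conn E' \<Longrightarrow> conn E \<subseteq> conn E'"
  by (rule conn_subset_equiv)
    (auto simp: equiv_def refl_on_def sym_def trans_def intro: conn_sym conn_trans)

lemma conn_invariant:
  assumes "\<And>x y. (x, y) \<in> E \<Longrightarrow> f x = f y" "(x, y) \<in> conn E"
  shows "f x = f y"
proof -
  have "conn E \<subseteq> {(x, y). f x = f y}"
    by (rule conn_subset_equiv) (auto simp: equiv_def refl_on_def sym_def trans_def intro: assms(1))
  with assms(2) show ?thesis by blast
qed

lemma conn_Image_conn: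
  assumes "conn E \<subseteq> conn E'"
  shows "conn E' `` (conn E `` {x}) = conn E' `` {x}"
proof
  show "conn E' `` (conn E `` {x}) \<subseteq> conn E' `` {x}"
  proof
    fix y assume "y \<in> conn E' `` (conn E `` {x})"
    then obtain z where "(x, z) \<in> conn E" and zy: "(z, y) \<in> conn E'" by blast
    then have "(x, z) \<in> conn E'" using assms by blast
    then show "y \<in> conn E' `` {x}" using conn_trans[OF _ zy] by simp
  qed
  show "conn E' `` {x} \<subseteq> conn E' `` (conn E `` {x})" by (intro Image_mono) simp_all
qed

lemma quotient_conn_eq_image: "V // conn E = (\<lambda>x. conn E `` {x}) ` V"
  by (auto simp: quotient_def)

lemma finite_quotient_conn: "finite V \<Longrightarrow> finite (V // conn E)"
  by (simp add: quotient_conn_eq_image)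

lemma card_quotient_conn_le_card_image:
  assumes "finite V" "\<And>p. p \<in> V \<Longrightarrow> (p, r p) \<in> conn E"
  shows "card (V // conn E) \<le> card (r ` V)"
proof -
  have "conn E `` {p} = conn E `` {r p}" if "p \<in> V" for p
    using assms(2)[OF that] by (rule conn_Image_eq)
  then have eq: "V // conn E = (\<lambda>x. conn E `` {x}) ` r ` V"
    unfolding quotient_conn_eq_image image_image by (intro image_cong) auto
  show ?thesis unfolding eq by (rule card_image_le[OF finite_imageI[OF assms(1)]])
qed

lemma card_quotient_conn_less_card_image:
  assumes "finite V" "\<And>p. p \<in> V \<Longrightarrow> (p, r p) \<in> conn E"
    and "x \<in> r ` V" "y \<in> r ` V" "x \<noteq> y" "(x, y) \<in> conn E"
  shows "card (V // conn E) < card (r ` V)"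
proof -
  let ?r = "\<lambda>p. if r p = x then y else r p"
  have "(p, ?r p) \<in> conn E" if "p \<in> V" for p
  proof (cases "r p = x")
    case True
    then show ?thesis using conn_trans[OF assms(2)[OF that]] assms(6) by simp
  qed (use assms(2)[OF that] in simp)
  then have le: "card (V // conn E) \<le> card (?r ` V)"
    by (rule card_quotient_conn_le_card_image[OF assms(1)])
  have "?r ` V \<subseteq> r ` V - {x}"
    using assms(3-5) by auto
  then have "card (?r ` V) \<le> card (r ` V - {x})"
    using assms(1) by (intro card_mono) auto
  also have "\<dots> < card (r ` V)"
    using assms(1,3) by (intro card_Diff1_less) auto
  finally show ?thesis using le by linarith
qed

lemma card_image_le_card_quotient_conn:
  assumes "finite V" "\<And>x y. (x, y) \<in> E \<Longrightarrow> f x = f y"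
  shows "card (f ` V) \<le> card (V // conn E)"
proof -
  have fx: "the_elem (f ` (conn E `` {x})) = f x" for x
  proof (rule the_elem_image_unique)
    have "x \<in> conn E `` {x}" by simp
    then show "conn E `` {x} \<noteq> {}" by blast
    show "f y = f x" if "y \<in> conn E `` {x}" for y
    proof -
      from that have "(x, y) \<in> conn E" by simp
      with assms(2) have "f x = f y" by (rule conn_invariant)
      then show ?thesis ..
    qed
  qed
  have eq: "f ` V = (\<lambda>X. the_elem (f ` X)) ` (V // conn E)"
    unfolding quotient_conn_eq_image image_image fx ..
  show ?thesis unfolding eq by (rule card_image_le[OF finite_quotient_conn[OF assms(1)]])
qed

lemma card_quotient_conn_antimono:
  assumes "finite V" "conn E \<subseteq> conn E'"
  shows "card (V // conn E') \<le> card (V // conn E)"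
proof -
  have eq: "V // conn E' = (\<lambda>X. conn E' `` X) ` (V // conn E)"
    unfolding quotient_conn_eq_image image_image conn_Image_conn[OF assms(2)] ..
  show ?thesis unfolding eq by (rule card_image_le[OF finite_quotient_conn[OF assms(1)]])
qed

text \<open>Every class of the larger relation is the image of an old class, and only the classes of
  \<open>a\<close> and \<open>b\<close> can be identified.\<close>
lemma card_quotient_conn_insert:
  assumes "finite V"
  shows "card (V // conn E) \<le> card (V // conn (insert (a, b) E)) + 1"
proof -
  let ?C = "\<lambda>x. conn E `` {x}" and ?C' = "\<lambda>x. conn (insert (a, b) E) `` {x}"
  let ?T = "?C a \<union> ?C b"
  have T_closed: "y \<in> ?T" if "x \<in> ?T" "(x, y) \<in> conn E" for x y
    using that by (auto intro: conn_trans)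
  have "equiv UNIV (conn E \<union> ?T \<times> ?T)"
    unfolding equiv_def refl_on_def sym_def trans_def
    by (auto intro: conn_sym conn_trans dest: T_closed)
  moreover have "insert (a, b) E \<subseteq> conn E \<union> ?T \<times> ?T"
    using conn_edge by fastforce
  ultimately have merged: "conn (insert (a, b) E) \<subseteq> conn E \<union> ?T \<times> ?T"
    by (rule conn_subset_equiv)
  have C'_eq: "conn (insert (a, b) E) `` ?C x = ?C' x" for x
    by (rule conn_Image_conn, rule conn_mono) auto
  have "inj_on (\<lambda>X. conn (insert (a, b) E) `` X) (V // conn E - {?C b})"
  proof (rule inj_onI)
    fix X Y assume X: "X \<in> V // conn E - {?C b}" and Y: "Y \<in> V // conn E - {?C b}"
      and eq: "conn (insert (a, b) E) `` X = conn (insert (a, b) E) `` Y"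
    obtain x y where xy: "X = ?C x" "Y = ?C y"
      using X Y unfolding quotient_conn_eq_image by blast
    have "y \<in> ?C' y" by simp
    then have "(x, y) \<in> conn (insert (a, b) E)"
      using eq unfolding xy C'_eq by (metis Image_singleton_iff)
    then have "(x, y) \<in> conn E \<union> ?T \<times> ?T" by (rule subsetD[OF merged])
    then consider "(x, y) \<in> conn E" | "x \<in> ?T" "y \<in> ?T" by blast
    then show "X = Y"
    proof cases
      case 1 then show ?thesis unfolding xy by (rule conn_Image_eq)
    next
      case 2
      have in_T: "?C z = ?C a \<or> ?C z = ?C b" if "z \<in> ?T" for z
      proof -
        from that consider "(a, z) \<in> conn E" | "(b, z) \<in> conn E" by blast
        then show ?thesis by cases (metis conn_Image_eq)+
      qed
      have "X \<noteq> ?C b" "Y \<noteq> ?C b" using X Y by auto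
      then show ?thesis using in_T[OF 2(1)] in_T[OF 2(2)] unfolding xy by argo
    qed
  qed
  moreover have "(\<lambda>X. conn (insert (a, b) E) `` X) ` (V // conn E - {?C b})
      \<subseteq> V // conn (insert (a, b) E)"
    unfolding quotient_conn_eq_image using C'_eq by blast
  ultimately have "card (V // conn E - {?C b}) \<le> card (V // conn (insert (a, b) E))"
    using finite_quotient_conn[OF assms] by (intro card_inj_on_le) auto
  moreover have "card (V // conn E) \<le> card (V // conn E - {?C b}) + 1"
  proof (cases "?C b \<in> V // conn E")
    case True
    then show ?thesis using card_Suc_Diff1[OF finite_quotient_conn[OF assms] True] by simp
  qed simp
  ultimately show ?thesis by linarith
qed

section \<open>Top coefficients of state sums\<close>

lemma fls_nth_loop_val_times:
  "fls_nth (loop_val * f) m = - fls_nth f (m - 1) - fls_nth f (m + 1)"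
  unfolding loop_val_def
  by (simp add: algebra_simps fls_X_times_conv_shift fls_X_inv_times_conv_shift)

lemma fls_nth_loop_val_power:
  "fls_nth (loop_val ^ n) (int n) = (-1) ^ n \<and> (\<forall>m > int n. fls_nth (loop_val ^ n) m = 0)"
proof (induction n)
  case (Suc n)
  then show ?case by (auto simp: fls_nth_loop_val_times)
qed simp

lemma fls_nth_smon_times: "fls_nth (smon e * f) m = fls_nth f (m - e)"
  unfolding smon_def by (simp add: fls_shifted_times_simps)

lemma fls_nth_neg_one_power_times: "fls_nth ((-1) ^ N * f) m = (-1) ^ N * fls_nth (f :: int fls) m"
  by (cases "even N") simp_all

lemma fls_nth_state_sum_top:
  fixes e :: "'s \<Rightarrow> int" and n :: "'s \<Rightarrow> nat"
  assumes "finite S" "s0 \<in> S"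
    and dominated: "\<And>s. s \<in> S \<Longrightarrow> s \<noteq> s0 \<Longrightarrow> e s + int (n s) < e s0 + int (n s0)"
    and m: "e s0 + int (n s0) \<le> m"
  shows "fls_nth (\<Sum>s\<in>S. smon (e s) * loop_val ^ n s) m =
           (if m = e s0 + int (n s0) then (-1) ^ n s0 else 0)"
proof -
  have nth_term: "fls_nth (smon (e s) * loop_val ^ n s) m =
      (if m = e s + int (n s) then (-1) ^ n s else 0)" if "e s + int (n s) \<le> m" for s
    using that fls_nth_loop_val_power[of "n s"] by (auto simp: fls_nth_smon_times)
  have "fls_nth (\<Sum>s\<in>S. smon (e s) * loop_val ^ n s) m
      = (\<Sum>s\<in>S. fls_nth (smon (e s) * loop_val ^ n s) m)"
    by (rule fls_nth_sum)
  also have "\<dots> = fls_nth (smon (e s0) * loop_val ^ n s0) m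
      + (\<Sum>s\<in>S - {s0}. fls_nth (smon (e s) * loop_val ^ n s) m)"
    using assms(1,2) by (rule sum.remove)
  also have "(\<Sum>s\<in>S - {s0}. fls_nth (smon (e s) * loop_val ^ n s) m) = 0"
  proof (rule sum.neutral, rule ballI)
    fix s assume "s \<in> S - {s0}"
    then have "e s + int (n s) < m" using dominated m by fastforce
    then show "fls_nth (smon (e s) * loop_val ^ n s) m = 0" using nth_term[of s] by simp
  qed
  finally show ?thesis using nth_term[OF m] by simp
qed

section \<open>Kauffman states of closed 3-braids\<close>

lemma finite_state_points: "finite (state_points n)"
  by (simp add: state_points_def)

lemma state_loops_conn: "state_loops w st = card (state_points (length w) // conn (state_edges w st))"
  by (simp add: state_loops_def conn_def)

lemma state_edges_vertical:
  "k < length w \<Longrightarrow> j \<in> {1, 2, 3} \<Longrightarrow> st ! k \<or> j \<notin> {nat \<bar>w ! k\<bar>, nat \<bar>w ! k\<bar> + 1} \<Longrightarrow>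
    ((k, j), (Suc k, j)) \<in> state_edges w st"
  unfolding state_edges_def by simp

lemma state_edges_cap:
  "k < length w \<Longrightarrow> \<not> st ! k \<Longrightarrow> ((k, nat \<bar>w ! k\<bar>), (k, nat \<bar>w ! k\<bar> + 1)) \<in> state_edges w st"
  and state_edges_cup:
  "k < length w \<Longrightarrow> \<not> st ! k \<Longrightarrow>
    ((Suc k, nat \<bar>w ! k\<bar>), (Suc k, nat \<bar>w ! k\<bar> + 1)) \<in> state_edges w st"
  and state_edges_closure:
  "j \<in> {1, 2, 3} \<Longrightarrow> ((length w, j), (0, j)) \<in> state_edges w st"
  unfolding state_edges_def by simp_all

lemma state_edges_cases:
  assumes "(p, q) \<in> state_edges w st"
  obtains (vertical) k j where "p = (k, j)" "q = (Suc k, j)" "k < length w" "j \<in> {1, 2, 3}"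
      "st ! k \<or> j \<notin> {nat \<bar>w ! k\<bar>, nat \<bar>w ! k\<bar> + 1}"
    | (cap) k where "p = (k, nat \<bar>w ! k\<bar>)" "q = (k, nat \<bar>w ! k\<bar> + 1)" "k < length w" "\<not> st ! k"
    | (cup) k where "p = (Suc k, nat \<bar>w ! k\<bar>)" "q = (Suc k, nat \<bar>w ! k\<bar> + 1)"
        "k < length w" "\<not> st ! k"
    | (closure) j where "p = (length w, j)" "q = (0, j)" "j \<in> {1, 2, 3}"
  using assms unfolding state_edges_def by auto

definition vertical_set :: "bool list \<Rightarrow> nat set" where
  "vertical_set st = {k. k < length st \<and> st ! k}"

lemma finite_vertical_set [simp]: "finite (vertical_set st)"
  by (simp add: vertical_set_def)

text \<open>The new cap is a single extra edge, and the new cup is already connected through the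
  two old vertical edges and the new cap.\<close>
lemma state_loops_le_switch:
  assumes w: "braid3_word w" and len: "length st = length w"
    and k: "k < length w" "st ! k"
  shows "state_loops w st \<le> state_loops w (st[k := False]) + 1"
proof -
  let ?V = "state_points (length w)" and ?g = "nat \<bar>w ! k\<bar>"
  let ?E = "state_edges w st" and ?E' = "state_edges w (st[k := False])"
  let ?cap = "((k, ?g), (k, ?g + 1))" and ?cup = "((Suc k, ?g), (Suc k, ?g + 1))"
  have g: "?g \<in> {1, 2, 3}" "?g + 1 \<in> {1, 2, 3}"
    using w k(1) unfolding braid3_word_def by (auto dest!: nth_mem)
  have upd: "st[k := False] ! i \<longleftrightarrow> i \<noteq> k \<and> st ! i" if "i < length w" for i
    using that len k(1) by (simp add: nth_list_update)
  have E'_sub: "?E' \<subseteq> insert ?cup (insert ?cap ?E)"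
  proof
    fix e assume "e \<in> ?E'"
    then obtain p q where e: "e = (p, q)" "(p, q) \<in> ?E'" by (cases e) simp
    from e(2) have "(p, q) \<in> insert ?cup (insert ?cap ?E)"
    proof (cases rule: state_edges_cases)
      case (vertical i j)
      then have "st ! i \<or> j \<notin> {nat \<bar>w ! i\<bar>, nat \<bar>w ! i\<bar> + 1}" using upd[of i] by auto
      then show ?thesis using state_edges_vertical[OF vertical(3,4)] vertical(1,2) by simp
    next
      case (cap i)
      then show ?thesis using upd[of i] state_edges_cap[of i w st] by (cases "i = k") auto
    next
      case (cup i)
      then show ?thesis using upd[of i] state_edges_cup[of i w st] by (cases "i = k") auto
    next
      case (closure j)
      then show ?thesis using state_edges_closure[of j w st] by simp
    qed
    then show "e \<in> insert ?cup (insert ?cap ?E)" by (simp add: e)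
  qed
  have cup: "?cup \<in> conn (insert ?cap ?E)"
  proof -
    have "((k, ?g), (Suc k, ?g)) \<in> ?E" "((k, ?g + 1), (Suc k, ?g + 1)) \<in> ?E"
      using state_edges_vertical[OF k(1) g(1)] state_edges_vertical[OF k(1) g(2)] k(2) by simp_all
    then have "((Suc k, ?g), (k, ?g)) \<in> conn (insert ?cap ?E)"
      and "((k, ?g), (k, ?g + 1)) \<in> conn (insert ?cap ?E)"
      and "((k, ?g + 1), (Suc k, ?g + 1)) \<in> conn (insert ?cap ?E)"
      by (simp_all add: conn_edge conn_edge_rev)
    then show ?thesis by (rule conn_trans[OF conn_trans])
  qed
  have "insert ?cup (insert ?cap ?E) \<subseteq> conn (insert ?cap ?E)"
    using cup conn_subset_self[of "insert ?cap ?E"] by (rule insert_subsetI)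
  with E'_sub have "?E' \<subseteq> conn (insert ?cap ?E)" by (rule order_trans)
  then have "card (?V // conn (insert ?cap ?E)) \<le> card (?V // conn ?E')"
    by (intro card_quotient_conn_antimono conn_subset_conn) (simp add: state_points_def)
  moreover have "card (?V // conn ?E) \<le> card (?V // conn (insert ?cap ?E)) + 1"
    by (rule card_quotient_conn_insert) (simp add: state_points_def)
  ultimately show ?thesis unfolding state_loops_conn by simp
qed

lemma state_loops_le_switches:
  assumes w: "braid3_word w"
    and len: "length st = length w" "length st' = length w"
    and sub: "vertical_set st' \<subseteq> vertical_set st"
  shows "state_loops w st \<le> state_loops w st' + card (vertical_set st - vertical_set st')"
  using len(1) sub
proof (induction "card (vertical_set st - vertical_set st')" arbitrary: st)
  case 0
  then have "vertical_set st = vertical_set st'" by auto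
  with 0 len(2) have "st = st'"
    by (intro nth_equalityI) (auto simp: vertical_set_def set_eq_iff)
  then show ?case by simp
next
  case (Suc n)
  then obtain k where k: "k \<in> vertical_set st - vertical_set st'"
    by (metis card.empty empty_iff ex_in_conv nat.distinct(1))
  then have k_lt: "k < length w" "st ! k" using Suc.prems(1) by (auto simp: vertical_set_def)
  have vs: "vertical_set (st[k := False]) = vertical_set st - {k}"
    using k_lt Suc.prems(1) by (auto simp: vertical_set_def nth_list_update)
  have diff: "vertical_set (st[k := False]) - vertical_set st' = vertical_set st - vertical_set st' - {k}"
    unfolding vs by blast
  then have card_diff: "card (vertical_set (st[k := False]) - vertical_set st') = n"
    using Suc.hyps(2) k by (simp add: card_Diff_singleton)
  have "state_loops w (st[k := False]) \<le> state_loops w st' + n"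
  proof (rule Suc.hyps(1)[OF card_diff[symmetric], unfolded card_diff])
    show "length (st[k := False]) = length w" using Suc.prems(1) by simp
    show "vertical_set st' \<subseteq> vertical_set (st[k := False])" using Suc.prems(2) k unfolding vs by blast
  qed
  moreover have "state_loops w st \<le> state_loops w (st[k := False]) + 1"
    by (rule state_loops_le_switch[OF w Suc.prems(1) k_lt])
  ultimately show ?case using Suc.hyps(2) by simp
qed

lemma state_exp_positive:
  assumes pos: "\<forall>g \<in> set w. g > 0" and len: "length st = length w"
  shows "state_exp w st = 2 * int (length w) - int (card (vertical_set st))"
proof -
  have "state_exp w st = (\<Sum>k<length w. 2 - of_bool (st ! k))"
    unfolding state_exp_def using pos
    by (intro sum.cong refl) (auto simp: crossing_sign_def dest!: nth_mem)
  also have "\<dots> = 2 * int (length w) - int (card ({..<length w} \<inter> {k. st ! k}))"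
    by (simp add: sum_subtractf sum_of_bool_eq)
  also have "{..<length w} \<inter> {k. st ! k} = vertical_set st"
    using len by (auto simp: vertical_set_def)
  finally show ?thesis .
qed

lemma writhe_positive:
  assumes "\<forall>g \<in> set w. g > 0"
  shows "writhe w = int (length w)"
proof -
  have "writhe w = (\<Sum>k<length w. 1)"
    unfolding writhe_def using assms
    by (intro sum.cong refl) (auto simp: crossing_sign_def dest!: nth_mem)
  then show ?thesis by simp
qed

section \<open>The braid x1^a1 x2^a2 x1^a3 x2^a4\<close>

locale four_block_braid =
  fixes a1 a2 a3 a4 :: nat
  assumes blocks_ge_2: "a1 \<ge> 2" "a2 \<ge> 2" "a3 \<ge> 2" "a4 \<ge> 2"
begin

abbreviation D :: nat where "D \<equiv> a1 + a2 + a3 + a4"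

definition word :: "int list" where
  "word = replicate a1 1 @ replicate a2 2 @ replicate a3 1 @ replicate a4 2"

definition gen :: "nat \<Rightarrow> nat" where
  "gen k = (if k < a1 then 1 else if k < a1 + a2 then 2 else if k < a1 + a2 + a3 then 1 else 2)"

text \<open>Rows strictly inside a block: in the all-horizontal state each of them carries a small loop
  through the positions \<open>gen k\<close> and \<open>gen k + 1\<close>, and everything else lies on one big loop.\<close>
definition interior_row :: "nat \<Rightarrow> bool" where
  "interior_row k \<longleftrightarrow> 0 < k \<and> k < D \<and> k \<noteq> a1 \<and> k \<noteq> a1 + a2 \<and> k \<noteq> a1 + a2 + a3"

definition in_small_loop :: "nat \<times> nat \<Rightarrow> bool" where
  "in_small_loop p \<longleftrightarrow> interior_row (fst p) \<and> (snd p = gen (fst p) \<or> snd p = Suc (gen (fst p)))"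

definition loop_rep :: "nat \<times> nat \<Rightarrow> nat \<times> nat" where
  "loop_rep p = (if in_small_loop p then (fst p, gen (fst p)) else (0, 1))"

definition no_adjacent_verticals :: "bool list \<Rightarrow> bool" where
  "no_adjacent_verticals st \<longleftrightarrow> (\<forall>k. Suc k < D \<longrightarrow> \<not> (st ! k \<and> st ! Suc k))"

abbreviation linked :: "bool list \<Rightarrow> nat \<times> nat \<Rightarrow> nat \<times> nat \<Rightarrow> bool" where
  "linked st p q \<equiv> (p, q) \<in> conn (state_edges word st)"

lemma length_word [simp]: "length word = D"
  by (simp add: word_def)

lemma word_nth: "k < D \<Longrightarrow> word ! k = int (gen k)"
  by (auto simp: word_def gen_def nth_append)

lemma word_positive: "\<forall>g \<in> set word. g > 0"
  by (auto simp: word_def)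

lemma braid3_word_word: "braid3_word word"
  by (auto simp: braid3_word_def word_def)

lemma gen_cases: "gen k = 1 \<or> gen k = 2"
  by (simp add: gen_def)

lemma gen_positions: "gen k \<in> {1, 2, 3}" "Suc (gen k) \<in> {1, 2, 3}"
  using gen_cases[of k] by auto

lemma gen_interior_row: "interior_row (Suc k) \<Longrightarrow> gen (Suc k) = gen k"
  by (auto simp: interior_row_def gen_def)

lemma interior_row_Suc: "k < D \<Longrightarrow> \<not> interior_row k \<Longrightarrow> interior_row (Suc k)"
  using blocks_ge_2 by (auto simp: interior_row_def)

lemma block_boundary:
  assumes "\<not> interior_row (Suc k)" "Suc k < D"
  shows "0 < k" "gen (k - 1) = gen k" "gen (Suc k) \<noteq> gen k"
    "Suc (Suc k) < D" "gen (Suc (Suc k)) = gen (Suc k)"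
  using assms blocks_ge_2 by (auto simp: interior_row_def gen_def)

lemma card_interior_rows: "card {k. interior_row k} = D - 4"
proof -
  have "{k. interior_row k} = {1..<D} - {a1, a1 + a2, a1 + a2 + a3}"
    by (auto simp: interior_row_def)
  moreover have "{a1, a1 + a2, a1 + a2 + a3} \<subseteq> {1..<D}" "card {a1, a1 + a2, a1 + a2 + a3} = 3"
    using blocks_ge_2 by auto
  ultimately show ?thesis by (simp add: card_Diff_subset)
qed

lemma linked_vertical:
  "k < D \<Longrightarrow> j \<in> {1, 2, 3} \<Longrightarrow> st ! k \<or> j \<notin> {gen k, Suc (gen k)} \<Longrightarrow> linked st (k, j) (Suc k, j)"
  using state_edges_vertical[of k word j st] by (simp add: word_nth conn_edge)

lemma linked_cap: "k < D \<Longrightarrow> \<not> st ! k \<Longrightarrow> linked st (k, gen k) (k, Suc (gen k))"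
  using state_edges_cap[of k word st] by (simp add: word_nth conn_edge)

lemma linked_cup: "k < D \<Longrightarrow> \<not> st ! k \<Longrightarrow> linked st (Suc k, gen k) (Suc k, Suc (gen k))"
  using state_edges_cup[of k word st] by (simp add: word_nth conn_edge)

lemma linked_closure: "j \<in> {1, 2, 3} \<Longrightarrow> linked st (D, j) (0, j)"
  using state_edges_closure[of j word st] by (simp add: conn_edge)

lemma linked_double_crossing:
  assumes st: "no_adjacent_verticals st" and k: "Suc k < D" "gen (Suc k) = gen k"
    and r: "r \<in> {k, Suc k, Suc (Suc k)}"
  shows "linked st (r, gen k) (r, Suc (gen k))"
proof -
  let ?g = "gen k"
  have vert: "linked st (i, j) (Suc i, j)" if "i \<in> {k, Suc k}" "st ! i" "j \<in> {?g, Suc ?g}" for i j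
    using linked_vertical[of i j st] that k gen_positions[of k] by auto
  have detour: "linked st (i, ?g) (i, Suc ?g)"
    if "linked st (i, ?g) (i', ?g)" "linked st (i', ?g) (i', Suc ?g)" "linked st (i, Suc ?g) (i', Suc ?g)"
    for i i'
    using conn_trans[OF conn_trans[OF that(1,2)] conn_sym[OF that(3)]] .
  have cap: "linked st (i, ?g) (i, Suc ?g)" and cup: "linked st (Suc i, ?g) (Suc i, Suc ?g)"
    if "i \<in> {k, Suc k}" "\<not> st ! i" for i
    using linked_cap[of i st] linked_cup[of i st] that k by auto
  have not_both: "\<not> st ! k \<or> \<not> st ! Suc k"
    using st k(1) unfolding no_adjacent_verticals_def by blast
  consider "r = k" | "r = Suc k" | "r = Suc (Suc k)" using r by blast
  then show ?thesis
  proof cases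
    case 1
    then show ?thesis
      using cap[of k] detour[OF vert[of k ?g] cap[of "Suc k"] vert[of k "Suc ?g"]] not_both by auto
  next
    case 2
    then show ?thesis using cup[of k] cap[of "Suc k"] not_both by auto
  next
    case 3
    then show ?thesis
      using cup[of "Suc k"] not_both
        detour[OF conn_sym[OF vert[of "Suc k" ?g]] cup[of k] conn_sym[OF vert[of "Suc k" "Suc ?g"]]]
      by auto
  qed
qed

text \<open>Position 3 on row 0 is reached only through the closure and the last cup of the final
  block.\<close>
lemma linked_row_zero:
  assumes st: "no_adjacent_verticals st" and j: "j \<in> {1, 2, 3}"
  shows "linked st (0, j) (0, 1)"
proof -
  have "gen 0 = 1" "gen 1 = 1" "gen (D - 2) = 2" "gen (Suc (D - 2)) = 2"
    using blocks_ge_2 by (auto simp: gen_def)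
  then have "linked st (0, 1) (0, 2)" and "linked st (D, 2) (D, 3)"
    using linked_double_crossing[OF st, of 0 0] linked_double_crossing[OF st, of "D - 2" D]
      blocks_ge_2 by (auto simp: numeral_2_eq_2 numeral_3_eq_3 Suc_diff_Suc)
  moreover have "linked st (0, 2) (D, 2)" "linked st (0, 3) (D, 3)"
    by (auto intro: conn_sym linked_closure)
  ultimately have "linked st (0, 2) (0, 1)" "linked st (0, 3) (0, 1)"
    by (blast intro: conn_sym conn_trans)+
  then show ?thesis using j by auto
qed

text \<open>Induction along the rows: an interior row inherits its big-loop point from the row above
  through a vertical edge; at a block boundary the caps and cups of the two adjacent blocks tie all
  three positions together.\<close>
lemma linked_to_base:
  assumes st: "no_adjacent_verticals st"
  shows "k \<le> D \<Longrightarrow> j \<in> {1, 2, 3} \<Longrightarrow> \<not> in_small_loop (k, j) \<Longrightarrow> linked st (k, j) (0, 1)"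
proof (induction k arbitrary: j)
  case 0
  then show ?case using linked_row_zero[OF st] by simp
next
  case (Suc k)
  let ?g = "gen k"
  have IH: "linked st (k, j') (0, 1)" if "j' \<in> {1, 2, 3}" "j' \<notin> {?g, Suc ?g}" for j'
    using Suc.IH[OF _ that(1)] Suc.prems(1) that(2) by (auto simp: in_small_loop_def)
  have from_above: "linked st (Suc k, j') (0, 1)" if "j' \<in> {1, 2, 3}" "j' \<notin> {?g, Suc ?g}" for j'
    using conn_trans[OF conn_sym[OF linked_vertical[of k j' st]] IH[OF that]] Suc.prems(1) that by simp
  consider "interior_row (Suc k)" | "Suc k = D" | "\<not> interior_row (Suc k)" "Suc k < D"
    using Suc.prems(1) by linarith
  then show ?case
  proof cases
    case 1
    then show ?thesis
      using from_above Suc.prems(2,3) gen_interior_row[OF 1] by (auto simp: in_small_loop_def)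
  next
    case 2
    then show ?thesis
      using conn_trans[OF linked_closure linked_row_zero[OF st]] Suc.prems(2) by simp
  next
    case 3
    note boundary = block_boundary[OF 3]
    obtain i where i: "k = Suc i" using boundary(1) not0_implies_Suc by blast
    have cup: "linked st (Suc k, ?g) (Suc k, Suc ?g)"
      using linked_double_crossing[OF st, of i "Suc k"] boundary(2) 3(2) i by simp
    have cap: "linked st (Suc k, gen (Suc k)) (Suc k, Suc (gen (Suc k)))"
      using linked_double_crossing[OF st, of "Suc k" "Suc k"] boundary(4,5) by simp
    consider "?g = 1" "gen (Suc k) = 2" | "?g = 2" "gen (Suc k) = 1"
      using gen_cases[of k] gen_cases[of "Suc k"] boundary(3) by auto
    then show ?thesis
    proof cases
      case 1
      have "linked st (Suc k, 3) (0, 1)" using from_above[of 3] 1 by simp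
      moreover have "linked st (Suc k, 2) (0, 1)"
        using conn_trans[OF cap] calculation 1 by (simp add: numeral_3_eq_3)
      moreover have "linked st (Suc k, 1) (0, 1)"
        using conn_trans[OF cup] calculation 1 by (simp add: numeral_2_eq_2)
      ultimately show ?thesis using Suc.prems(2) by auto
    next
      case 2
      have "linked st (Suc k, 1) (0, 1)" using from_above[of 1] 2 by simp
      moreover have "linked st (Suc k, 2) (0, 1)"
        using conn_trans[OF conn_sym[OF cap]] calculation 2 by (simp add: numeral_2_eq_2)
      moreover have "linked st (Suc k, 3) (0, 1)"
        using conn_trans[OF conn_sym[OF cup]] calculation 2 by (simp add: numeral_2_eq_2 numeral_3_eq_3)
      ultimately show ?thesis using Suc.prems(2) by auto
    qed
  qed
qed

lemma linked_loop_rep: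
  assumes st: "no_adjacent_verticals st" and p: "p \<in> state_points D"
  shows "linked st p (loop_rep p)"
proof (cases "in_small_loop p")
  case True
  obtain k j where kj: "p = (k, j)" by (cases p)
  then have "interior_row k" using True by (simp add: in_small_loop_def)
  then obtain i where i: "k = Suc i" "Suc i < D" by (auto simp: interior_row_def dest: gr0_implies_Suc)
  have "gen k = gen i" using gen_interior_row \<open>interior_row k\<close> i(1) by simp
  then have "linked st (k, gen k) (k, Suc (gen k))"
    using linked_double_crossing[OF st i(2), of k] gen_interior_row \<open>interior_row k\<close> i(1) by simp
  then show ?thesis using True kj by (auto simp: in_small_loop_def loop_rep_def intro: conn_sym)
next
  case False
  then show ?thesis
    using linked_to_base[OF st] p by (cases p) (simp add: loop_rep_def state_points_def)
qed

lemma loop_rep_image: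
  "loop_rep ` state_points D = insert (0, 1) ((\<lambda>k. (k, gen k)) ` {k. interior_row k})"
proof
  show "loop_rep ` state_points D \<subseteq> insert (0, 1) ((\<lambda>k. (k, gen k)) ` {k. interior_row k})"
    by (auto simp: loop_rep_def in_small_loop_def)
  have "(0, 1) = loop_rep (0, 1)" "(0, 1) \<in> state_points D"
    by (simp_all add: loop_rep_def in_small_loop_def interior_row_def state_points_def)
  moreover have "(k, gen k) = loop_rep (k, gen k)" "(k, gen k) \<in> state_points D"
    if "interior_row k" for k
    using that gen_positions[of k] by (auto simp: loop_rep_def in_small_loop_def interior_row_def state_points_def)
  ultimately show "insert (0, 1) ((\<lambda>k. (k, gen k)) ` {k. interior_row k}) \<subseteq> loop_rep ` state_points D"
    by blast
qed

lemma card_loop_rep_image: "card (loop_rep ` state_points D) = D - 3"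
proof -
  have "finite {k. interior_row k}" by (auto simp: interior_row_def)
  moreover have "(0, 1) \<notin> (\<lambda>k. (k, gen k)) ` {k. interior_row k}"
    by (auto simp: interior_row_def)
  moreover have "inj_on (\<lambda>k. (k, gen k)) {k. interior_row k}" by (rule inj_onI) simp
  ultimately have "card (loop_rep ` state_points D) = Suc (card {k. interior_row k})"
    unfolding loop_rep_image by (simp add: card_image)
  then show ?thesis using card_interior_rows blocks_ge_2 by simp
qed

lemma loop_rep_invariant_all_horizontal:
  assumes "(p, q) \<in> state_edges word (replicate D False)"
  shows "loop_rep p = loop_rep q"
  using assms
proof (cases rule: state_edges_cases)
  case (vertical i j)
  then have "\<not> in_small_loop p" "\<not> in_small_loop q"
    using gen_interior_row[of i] by (auto simp: in_small_loop_def word_nth)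
  then show ?thesis by (simp add: loop_rep_def)
next
  case (cap i)
  then show ?thesis by (simp add: loop_rep_def in_small_loop_def word_nth)
next
  case (cup i)
  then show ?thesis using gen_interior_row[of i] by (auto simp: loop_rep_def in_small_loop_def word_nth)
next
  case (closure j)
  then show ?thesis by (simp add: loop_rep_def in_small_loop_def interior_row_def)
qed

lemma state_loops_all_horizontal: "state_loops word (replicate D False) = D - 3"
proof -
  have "no_adjacent_verticals (replicate D False)" by (simp add: no_adjacent_verticals_def)
  then have "state_loops word (replicate D False) \<le> card (loop_rep ` state_points D)"
    unfolding state_loops_conn length_word
    by (intro card_quotient_conn_le_card_image finite_state_points linked_loop_rep)
  moreover have "card (loop_rep ` state_points D) \<le> state_loops word (replicate D False)"
    unfolding state_loops_conn length_word
    by (intro card_image_le_card_quotient_conn finite_state_points loop_rep_invariant_all_horizontal)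
  ultimately show ?thesis using card_loop_rep_image by simp
qed

text \<open>The vertical smoothing at \<open>k0\<close> joins the small loop of an interior row \<open>m\<close>
  (\<open>k0\<close> or \<open>k0 + 1\<close>) to the loop through a point of the neighbouring row, whose representative
  is a different one.\<close>
lemma state_loops_single_vertical:
  assumes k0: "k0 < D"
  shows "state_loops word ((replicate D False)[k0 := True]) < D - 3"
proof -
  let ?st = "(replicate D False)[k0 := True]"
  define m where "m = (if interior_row k0 then k0 else Suc k0)"
  define q where "q = (if interior_row k0 then (Suc k0, gen k0) else (k0, gen k0))"
  have st_nth: "?st ! k \<longleftrightarrow> k = k0" if "k < D" for k
    using that k0 by (simp add: nth_list_update)
  have st: "no_adjacent_verticals ?st"
    using st_nth unfolding no_adjacent_verticals_def by (metis Suc_lessD n_not_Suc_n)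
  have m: "interior_row m" "gen m = gen k0"
    using interior_row_Suc[OF k0] gen_interior_row[of k0] by (auto simp: m_def)
  have m_pos: "0 < m" "m < D" using m(1) by (auto simp: interior_row_def)
  have q: "q \<in> state_points D" "fst q \<noteq> m"
    using k0 gen_positions[of k0] by (auto simp: q_def m_def state_points_def)
  have vertical: "linked ?st (k0, gen k0) (Suc k0, gen k0)"
    using linked_vertical[OF k0 gen_positions(1)] st_nth[OF k0] by simp
  have "linked ?st (m, gen m) q"
  proof (cases "interior_row k0")
    case True
    then show ?thesis using vertical by (simp add: m_def q_def)
  next
    case False
    then show ?thesis using conn_sym[OF vertical] m(2) by (simp add: m_def q_def)
  qed
  then have "linked ?st (m, gen m) (loop_rep q)"
    by (rule conn_trans[OF _ linked_loop_rep[OF st q(1)]])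
  moreover have "loop_rep (m, gen m) = (m, gen m)" "(m, gen m) \<in> state_points D"
    using m(1) m_pos(2) gen_positions[of m] by (auto simp: loop_rep_def in_small_loop_def state_points_def)
  then have "(m, gen m) \<in> loop_rep ` state_points D" by (metis image_eqI)
  moreover have "(m, gen m) \<noteq> loop_rep q"
    using q(2) m_pos(1) by (auto simp: loop_rep_def)
  ultimately have "card (state_points D // conn (state_edges word ?st)) < card (loop_rep ` state_points D)"
    using q(1) by (intro card_quotient_conn_less_card_image[where x = "(m, gen m)" and y = "loop_rep q"]
        finite_state_points linked_loop_rep[OF st]) auto
  then show ?thesis unfolding state_loops_conn length_word card_loop_rep_image .
qed

lemma state_degree_less:
  assumes len: "length st = D" and st: "st \<noteq> replicate D False"
  shows "state_exp word st + int (state_loops word st - 1) < 3 * int D - 4"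
proof -
  have "\<exists>k0 < D. st ! k0"
  proof (rule ccontr)
    assume "\<not> (\<exists>k0 < D. st ! k0)"
    then have "st = replicate D False" using len by (intro nth_equalityI) auto
    with st show False ..
  qed
  then obtain k0 where k0_lt: "k0 < D" and "st ! k0" by blast
  then have k0: "k0 \<in> vertical_set st" using len by (simp add: vertical_set_def)
  let ?st1 = "(replicate D False)[k0 := True]"
  have "vertical_set ?st1 = {k0}"
    using k0_lt by (auto simp: vertical_set_def nth_list_update)
  then have "state_loops word st \<le> state_loops word ?st1 + card (vertical_set st - {k0})"
    using state_loops_le_switches[OF braid3_word_word, of st ?st1] len k0 by simp
  moreover have "card (vertical_set st - {k0}) = card (vertical_set st) - 1"
    using k0 by simp
  moreover have "card (vertical_set st) \<ge> 1"
    using k0 by (metis One_nat_def Suc_leI card_gt_0_iff empty_iff finite_vertical_set)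
  moreover have "state_loops word ?st1 < D - 3"
    using state_loops_single_vertical[OF k0_lt] .
  ultimately have "state_loops word st + 5 \<le> D + card (vertical_set st)"
    using blocks_ge_2 by linarith
  then have "int (state_loops word st - 1) + 5 < int D + int (card (vertical_set st))"
    using blocks_ge_2 by (cases "state_loops word st = 0") (simp_all add: of_nat_diff)
  moreover have "state_exp word st = 2 * int D - int (card (vertical_set st))"
    using state_exp_positive[OF word_positive] len by simp
  ultimately show ?thesis by (smt (verit))
qed

lemma leading_term_V3_word: "leading_term (V3 word) 1 (3 * int D - 4)"
proof -
  let ?S = "{st :: bool list. length st = length word}" and ?st0 = "replicate D False"
  let ?N = "3 * int D - 4"
  have top: "state_exp word ?st0 + int (state_loops word ?st0 - 1) = ?N"
    using state_exp_positive[OF word_positive, of ?st0] state_loops_all_horizontal blocks_ge_2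
    by (simp add: vertical_set_def)
  have finite: "finite ?S" using finite_lists_length_eq[of "UNIV :: bool set"] by simp
  have V3: "V3 word = (-1) ^ D * (\<Sum>st\<in>?S. smon (state_exp word st) * loop_val ^ (state_loops word st - 1))"
    unfolding V3_def writhe_positive[OF word_positive] by (simp only: abs_of_nat nat_int length_word)
  have coeff: "fls_nth (V3 word) m = (if m = ?N then (-1) ^ D * (-1) ^ (D - 4) else 0)"
    if "?N \<le> m" for m
    unfolding V3 fls_nth_neg_one_power_times
    using fls_nth_state_sum_top[OF finite, of ?st0 "state_exp word" "\<lambda>st. state_loops word st - 1" m]
      state_degree_less that top state_loops_all_horizontal
    by auto
  have "D + (D - 4) = 2 * (D - 2)" using blocks_ge_2 by simp
  then have "(-1 :: int) ^ D * (-1) ^ (D - 4) = 1"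
    unfolding power_add[symmetric] by simp
  then have "fls_nth (V3 word) ?N = 1" using coeff[of ?N] by simp
  moreover have "fls_nth (V3 word) m = 0" if "m > ?N" for m using coeff[of m] that by simp
  ultimately show ?thesis unfolding leading_term_def by simp
qed

end

theorem proposition4p4:
  fixes a1 a2 a3 a4 :: nat
  assumes "a1 \<ge> 2" and "a2 \<ge> 2" and "a3 \<ge> 2" and "a4 \<ge> 2"
  defines "D \<equiv> a1 + a2 + a3 + a4"
  shows "leading_term (V3 (replicate a1 1 @ replicate a2 2 @ replicate a3 1 @ replicate a4 2))
           1 (3 * int D - 4)"
proof -
  interpret four_block_braid a1 a2 a3 a4
    using assms by unfold_locales
  show ?thesis
    using leading_term_V3_word unfolding D_def word_def .
qed

end
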